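(* Let $G=(V,E)$ be a planar biconnected graph with $\deg(v)\ge 3$ for every $v\in V$. Then the SPQR-tree of $G$ contains at least one Q-node that is adjacent to a P-node or an R-node.
   Context: The SPQR-tree (with Q-nodes) of a biconnected graph $G$ is the standard decomposition tree of $G$ into its triconnected components. Each node $\mu$ has a skeleton graph: for a Q-node it consists of two parallel edges, one of which is an edge of $G$; for an S-node it is a simple cycle of length at least three; for a P-node it is a bundle of at least three parallel edges between two vertices; for an R-node it is a simple triconnected graph. The leaves are exactly the Q-nodes, one for each edge of $G$; no two S-nodes and no two P-nodes are adjacent in the tree. *)

theory Defs
  imports "HOL-Analysis.Analysis"
begin

definition simple_graph :: "'v set \<Rightarrow> 'v set set \<Rightarrow> bool" where
  "simple_graph V E \<longleftrightarrow> finite V \<and> (\<forall>e\<in>E. e \<subseteq> V \<and> card e = 2)"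

definition degree :: "'v set set \<Rightarrow> 'v \<Rightarrow> nat" where
  "degree E v = card {e\<in>E. v \<in> e}"

text \<open>Connectivity of the graph with vertex set Vs, using those edges of Es whose
endpoints both lie in Vs (so this also describes vertex-deleted subgraphs).\<close>

definition graph_connected :: "'v set \<Rightarrow> 'v set set \<Rightarrow> bool" where
  "graph_connected Vs Es \<longleftrightarrow>
     (\<forall>x\<in>Vs. \<forall>y\<in>Vs. (x, y) \<in> {(a, b). a \<in> Vs \<and> b \<in> Vs \<and> {a, b} \<in> Es}\<^sup>*)"

definition biconnected :: "'v set \<Rightarrow> 'v set set \<Rightarrow> bool" where
  "biconnected V E \<longleftrightarrow> card V \<ge> 3 \<and> graph_connected V E \<and>
     (\<forall>v\<in>V. graph_connected (V - {v}) E)"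

definition triconnected :: "'v set \<Rightarrow> 'v set set \<Rightarrow> bool" where
  "triconnected V E \<longleftrightarrow> finite V \<and> card V \<ge> 4 \<and>
     (\<forall>X. X \<subseteq> V \<and> card X \<le> 2 \<longrightarrow> graph_connected (V - X) E)"

text \<open>Planarity: an embedding into the plane (identified with the complex numbers),
vertices to distinct points, edges to arcs joining the images of their endpoints,
passing through no other vertex image, and pairwise meeting only in common endpoints.\<close>

definition planar :: "'v set \<Rightarrow> 'v set set \<Rightarrow> bool" where
  "planar V E \<longleftrightarrow> (\<exists>(p :: 'v \<Rightarrow> complex) (\<gamma> :: 'v set \<Rightarrow> real \<Rightarrow> complex).
     inj_on p V \<and>
     (\<forall>e\<in>E. arc (\<gamma> e) \<and> {pathstart (\<gamma> e), pathfinish (\<gamma> e)} = p ` e \<and>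
              path_image (\<gamma> e) \<inter> p ` V = p ` e) \<and>
     (\<forall>e\<in>E. \<forall>e'\<in>E. e \<noteq> e' \<longrightarrow>
              path_image (\<gamma> e) \<inter> path_image (\<gamma> e') \<subseteq> p ` (e \<inter> e')))"

datatype spqr_type = S_node | P_node | Q_node | R_node

text \<open>A candidate SPQR-tree: tree nodes and tree edges (2-element sets of nodes),
a type for each node, the vertex set of each skeleton (a subset of the vertices of G),
the real edges of G contained in each skeleton, and for each tree edge the pair of
vertices that are the endpoints of the two virtual edges associated with it.\<close>

record ('n, 'v) spqr_tree =
  nodes :: "'n set"
  tedges :: "'n set set"
  ntype :: "'n \<Rightarrow> spqr_type"
  skV :: "'n \<Rightarrow> 'v set"
  realE :: "'n \<Rightarrow> 'v set set"
  vpair :: "'n set \<Rightarrow> 'v set"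

datatype ('n, 'v) skel_edge = Real "'v set" | Virt 'n

definition tree_nbrs :: "('n, 'v) spqr_tree \<Rightarrow> 'n \<Rightarrow> 'n set" where
  "tree_nbrs T \<mu> = {\<nu>. {\<mu>, \<nu>} \<in> tedges T}"

definition skelE :: "('n, 'v) spqr_tree \<Rightarrow> 'n \<Rightarrow> ('n, 'v) skel_edge set" where
  "skelE T \<mu> = Real ` realE T \<mu> \<union> Virt ` tree_nbrs T \<mu>"

fun skel_ends :: "('n, 'v) spqr_tree \<Rightarrow> 'n \<Rightarrow> ('n, 'v) skel_edge \<Rightarrow> 'v set" where
  "skel_ends T \<mu> (Real e) = e"
| "skel_ends T \<mu> (Virt \<nu>) = vpair T {\<mu>, \<nu>}"

definition is_simple_cycle :: "'v set \<Rightarrow> 'x set \<Rightarrow> ('x \<Rightarrow> 'v set) \<Rightarrow> bool" where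
  "is_simple_cycle Vs Es ends \<longleftrightarrow> (\<exists>k (f :: nat \<Rightarrow> 'v). k \<ge> 3 \<and>
     bij_betw f {0..<k} Vs \<and>
     bij_betw ends Es {{f i, f (Suc i mod k)} | i. i < k})"

definition is_tree :: "'n set \<Rightarrow> 'n set set \<Rightarrow> bool" where
  "is_tree N TE \<longleftrightarrow> finite N \<and> N \<noteq> {} \<and> (\<forall>t\<in>TE. t \<subseteq> N \<and> card t = 2) \<and>
     graph_connected N TE \<and> card TE + 1 = card N"

definition skeleton_ok :: "('n, 'v) spqr_tree \<Rightarrow> 'n \<Rightarrow> bool" where
  "skeleton_ok T \<mu> \<longleftrightarrow>
    (case ntype T \<mu> of
       Q_node \<Rightarrow> (\<exists>e \<nu>. realE T \<mu> = {e} \<and> tree_nbrs T \<mu> = {\<nu>} \<and>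
                        vpair T {\<mu>, \<nu>} = e \<and> skV T \<mu> = e)
     | S_node \<Rightarrow> realE T \<mu> = {} \<and>
                 is_simple_cycle (skV T \<mu>) (skelE T \<mu>) (skel_ends T \<mu>)
     | P_node \<Rightarrow> realE T \<mu> = {} \<and> card (skV T \<mu>) = 2 \<and>
                 finite (skelE T \<mu>) \<and> card (skelE T \<mu>) \<ge> 3 \<and>
                 (\<forall>x\<in>skelE T \<mu>. skel_ends T \<mu> x = skV T \<mu>)
     | R_node \<Rightarrow> realE T \<mu> = {} \<and>
                 (\<forall>x\<in>skelE T \<mu>. card (skel_ends T \<mu> x) = 2 \<and> skel_ends T \<mu> x \<subseteq> skV T \<mu>) \<and>
                 inj_on (skel_ends T \<mu>) (skelE T \<mu>) \<and>
                 triconnected (skV T \<mu>) (skel_ends T \<mu> ` skelE T \<mu>))"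

text \<open>T is an SPQR-tree (with Q-nodes) of the graph (V, E): a tree whose skeletons
have the prescribed shapes, no two adjacent S-nodes and no two adjacent P-nodes,
each edge of G is the real edge of exactly one (Q-)node, and G is obtained by
merging the skeletons along the virtual edge pairs of the tree edges (vertices
of G occur in a connected subtree of nodes, and adjacent skeletons share exactly
the endpoints of their common virtual edge), deleting the virtual edges.\<close>

definition is_SPQR_tree :: "'v set \<Rightarrow> 'v set set \<Rightarrow> ('n, 'v) spqr_tree \<Rightarrow> bool" where
  "is_SPQR_tree V E T \<longleftrightarrow>
    is_tree (nodes T) (tedges T) \<and>
    (\<forall>\<mu>\<in>nodes T. skV T \<mu> \<subseteq> V \<and> realE T \<mu> \<subseteq> E \<and>
                 (\<forall>e\<in>realE T \<mu>. e \<subseteq> skV T \<mu>) \<and> skeleton_ok T \<mu>) \<and>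
    (\<forall>e\<in>E. \<exists>!\<mu>. \<mu> \<in> nodes T \<and> e \<in> realE T \<mu>) \<and>
    (\<forall>t\<in>tedges T. card (vpair T t) = 2 \<and> (\<forall>\<mu>\<in>t. vpair T t \<subseteq> skV T \<mu>)) \<and>
    (\<forall>\<mu> \<nu>. {\<mu>, \<nu>} \<in> tedges T \<longrightarrow> skV T \<mu> \<inter> skV T \<nu> = vpair T {\<mu>, \<nu>}) \<and>
    (\<forall>\<mu> \<nu>. {\<mu>, \<nu>} \<in> tedges T \<longrightarrow>
        \<not> (ntype T \<mu> = S_node \<and> ntype T \<nu> = S_node) \<and>
        \<not> (ntype T \<mu> = P_node \<and> ntype T \<nu> = P_node)) \<and>
    (\<Union>\<mu>\<in>nodes T. skV T \<mu>) = V \<and>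
    (\<forall>v\<in>V. graph_connected {\<mu>\<in>nodes T. v \<in> skV T \<mu>} (tedges T))"

end

theory Submission
  imports Defs
begin

text \<open>Two adjacent Q-nodes would make up the whole tree and G a single edge, so every
Q-node is a leaf hanging off a non-Q node; deleting the Q-nodes therefore leaves a tree, which
has a node \<mu> with at most one non-Q neighbour \<nu>. If \<mu> is an S-node, a vertex w of its
cycle outside the virtual edge towards \<nu> occurs only in \<mu> and its Q-leaves, so every edge
of G at w is one of the two cycle edges at w, contradicting deg w \<ge> 3. Otherwise \<mu> is a
P-node (at least three skeleton edges) or an R-node (its triconnected skeleton has at least
four vertices, hence at least two edges), so \<mu> has two neighbours and one of them is a
Q-node.\<close>

lemma graph_connected_imp_incident_edge:
  assumes "graph_connected Vs Es" "x \<in> Vs" "y \<in> Vs" "x \<noteq> y"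
  shows "\<exists>e\<in>Es. x \<in> e"
proof -
  have "(x, y) \<in> {(a, b). a \<in> Vs \<and> b \<in> Vs \<and> {a, b} \<in> Es}\<^sup>*"
    using assms unfolding graph_connected_def by blast
  then show ?thesis using assms(4)
    by (cases rule: converse_rtranclE) auto
qed

lemma graph_connected_subset_closed:
  assumes "graph_connected Vs Es" "x \<in> Vs" "x \<in> S"
    and "\<And>a b. a \<in> S \<Longrightarrow> a \<in> Vs \<Longrightarrow> b \<in> Vs \<Longrightarrow> {a, b} \<in> Es \<Longrightarrow> b \<in> S"
  shows "Vs \<subseteq> S"
proof
  fix y assume "y \<in> Vs"
  then have "(x, y) \<in> {(a, b). a \<in> Vs \<and> b \<in> Vs \<and> {a, b} \<in> Es}\<^sup>*"
    using assms(1,2) unfolding graph_connected_def by blast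
  then show "y \<in> S"
    by (induction rule: rtrancl_induct) (use assms(3,4) in auto)
qed

lemma sum_card_incident_eq_twice_card:
  assumes "finite N" "finite TE" "\<forall>t\<in>TE. t \<subseteq> N \<and> card t = 2"
  shows "(\<Sum>\<mu>\<in>N. card {t\<in>TE. \<mu> \<in> t}) = 2 * card TE"
proof -
  have "(\<Sum>\<mu>\<in>N. card {t\<in>TE. \<mu> \<in> t}) = (\<Sum>\<mu>\<in>N. \<Sum>t\<in>TE. if \<mu> \<in> t then 1 else 0)"
    using assms(2) by (intro sum.cong refl) (simp add: sum.If_cases Int_def conj_commute)
  also have "\<dots> = (\<Sum>t\<in>TE. \<Sum>\<mu>\<in>N. if \<mu> \<in> t then 1 else 0)"
    by (rule sum.swap)
  also have "\<dots> = (\<Sum>t\<in>TE. card (N \<inter> t))"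
    using assms(1) by (simp add: sum.If_cases)
  also have "\<dots> = (\<Sum>t\<in>TE. 2)"
    using assms(3) by (intro sum.cong) (auto simp: Int_absorb1)
  finally show ?thesis by simp
qed

lemma ex_vertex_incident_less_two:
  assumes "finite N" "\<forall>t\<in>TE. t \<subseteq> N \<and> card t = 2" "card TE < card N"
  shows "\<exists>\<mu>\<in>N. card {t\<in>TE. \<mu> \<in> t} < 2"
proof (rule ccontr)
  assume "\<not> ?thesis"
  then have "(\<Sum>\<mu>\<in>N. 2) \<le> (\<Sum>\<mu>\<in>N. card {t\<in>TE. \<mu> \<in> t})"
    by (intro sum_mono) (simp add: not_less)
  moreover have "finite TE"
    using assms(1,2) by (meson Pow_iff finite_Pow_iff finite_subset subsetI)
  ultimately show False
    using sum_card_incident_eq_twice_card[OF assms(1) _ assms(2)] assms(3) by simp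
qed

lemma Suc_mod_eq_imp_eq_pred_mod:
  assumes "i < k" "Suc i mod k = j"
  shows "i = (j + k - 1) mod k"
proof (cases "Suc i < k")
  case True
  then have "j + k - 1 = i + k" using assms by simp
  then show ?thesis using assms by simp
next
  case False
  then have "Suc i = k" using assms by simp
  then show ?thesis using assms by simp
qed

lemma simple_cycle_card_vertices:
  assumes "is_simple_cycle Vs Es ends"
  shows "3 \<le> card Vs"
  using assms bij_betw_same_card unfolding is_simple_cycle_def by fastforce

lemma simple_cycle_card_incident_le_two:
  assumes "is_simple_cycle Vs Es ends" "w \<in> Vs"
  shows "card {x \<in> ends ` Es. w \<in> x} \<le> 2"
proof -
  obtain k f where k: "k \<ge> 3" and f: "bij_betw f {0..<k} Vs"
    and ends: "bij_betw ends Es {{f i, f (Suc i mod k)} | i. i < k}"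
    using assms(1) unfolding is_simple_cycle_def by blast
  obtain j where j: "j < k" "w = f j"
    using assms(2) bij_betw_imp_surj_on[OF f] by (metis atLeastLessThan_iff imageE)
  have inj: "inj_on f {0..<k}" using f by (rule bij_betw_imp_inj_on)
  define J where "J = {j, (j + k - 1) mod k}"
  have "{x \<in> ends ` Es. w \<in> x} \<subseteq> (\<lambda>i. {f i, f (Suc i mod k)}) ` J"
  proof
    fix x assume "x \<in> {x \<in> ends ` Es. w \<in> x}"
    then obtain i where i: "i < k" "x = {f i, f (Suc i mod k)}" and w: "w \<in> x"
      using bij_betw_imp_surj_on[OF ends] by auto
    have "i = j \<or> Suc i mod k = j"
      using w i j k inj by (auto simp: inj_on_eq_iff)
    then have "i \<in> J"
      unfolding J_def using Suc_mod_eq_imp_eq_pred_mod[OF i(1)] by blast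
    then show "x \<in> (\<lambda>i. {f i, f (Suc i mod k)}) ` J" using i(2) by blast
  qed
  then have "card {x \<in> ends ` Es. w \<in> x} \<le> card J"
    by (metis (no_types, lifting) J_def card_image_le card_mono finite.emptyI
        finite.insertI finite_imageI le_trans)
  also have "card J \<le> 2" unfolding J_def by (simp add: card_insert_le_m1)
  finally show ?thesis .
qed

locale SPQR_tree_of =
  fixes V :: "'v set" and E :: "'v set set" and T :: "('n, 'v) spqr_tree"
  assumes simple: "simple_graph V E"
    and three_le_card: "3 \<le> card V"
    and SPQR: "is_SPQR_tree V E T"
begin

lemma is_tree_nodes: "is_tree (nodes T) (tedges T)"
  using SPQR unfolding is_SPQR_tree_def by simp

lemma finite_nodes: "finite (nodes T)"
  using is_tree_nodes unfolding is_tree_def by simp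

lemma tedge_subset_card: "t \<in> tedges T \<Longrightarrow> t \<subseteq> nodes T \<and> card t = 2"
  using is_tree_nodes unfolding is_tree_def by blast

lemma finite_tedges: "finite (tedges T)"
  using tedge_subset_card finite_nodes by (meson Pow_iff finite_Pow_iff finite_subset subsetI)

lemma nodes_connected: "graph_connected (nodes T) (tedges T)"
  using is_tree_nodes unfolding is_tree_def by simp

lemma skV_subset: "\<mu> \<in> nodes T \<Longrightarrow> skV T \<mu> \<subseteq> V"
  using SPQR unfolding is_SPQR_tree_def by simp

lemma realE_subset: "\<mu> \<in> nodes T \<Longrightarrow> realE T \<mu> \<subseteq> E"
  using SPQR unfolding is_SPQR_tree_def by simp

lemma skeleton_ok: "\<mu> \<in> nodes T \<Longrightarrow> skeleton_ok T \<mu>"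
  using SPQR unfolding is_SPQR_tree_def by simp

lemma ex1_realE: "e \<in> E \<Longrightarrow> \<exists>!\<mu>. \<mu> \<in> nodes T \<and> e \<in> realE T \<mu>"
  using SPQR unfolding is_SPQR_tree_def by simp

lemma card_vpair: "t \<in> tedges T \<Longrightarrow> card (vpair T t) = 2"
  using SPQR unfolding is_SPQR_tree_def by simp

lemma skV_Int: "{\<mu>, \<nu>} \<in> tedges T \<Longrightarrow> skV T \<mu> \<inter> skV T \<nu> = vpair T {\<mu>, \<nu>}"
  using SPQR unfolding is_SPQR_tree_def by simp

lemma Union_skV: "(\<Union>\<mu>\<in>nodes T. skV T \<mu>) = V"
  using SPQR unfolding is_SPQR_tree_def by simp

lemma nodes_containing_connected:
  "v \<in> V \<Longrightarrow> graph_connected {\<mu>\<in>nodes T. v \<in> skV T \<mu>} (tedges T)"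
  using SPQR unfolding is_SPQR_tree_def by simp

lemma tedge_nodes:
  assumes "{\<mu>, \<nu>} \<in> tedges T"
  shows "\<mu> \<in> nodes T" "\<nu> \<in> nodes T" "\<mu> \<noteq> \<nu>"
proof -
  have "{\<mu>, \<nu>} \<subseteq> nodes T \<and> card {\<mu>, \<nu>} = 2"
    using tedge_subset_card assms by blast
  then show "\<mu> \<in> nodes T" "\<nu> \<in> nodes T" "\<mu> \<noteq> \<nu>" by auto
qed

lemma tree_nbrs_sym: "\<nu> \<in> tree_nbrs T \<mu> \<Longrightarrow> \<mu> \<in> tree_nbrs T \<nu>"
  unfolding tree_nbrs_def by (simp add: insert_commute)

lemma tree_nbrs_subset_nodes: "tree_nbrs T \<mu> \<subseteq> nodes T"
  unfolding tree_nbrs_def using tedge_nodes by blast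

lemma finite_tree_nbrs: "finite (tree_nbrs T \<mu>)"
  using finite_subset[OF tree_nbrs_subset_nodes finite_nodes] .

lemma Q_nodeE:
  assumes "\<mu> \<in> nodes T" "ntype T \<mu> = Q_node"
  obtains e \<nu> where "realE T \<mu> = {e}" "tree_nbrs T \<mu> = {\<nu>}" "vpair T {\<mu>, \<nu>} = e"
    "skV T \<mu> = e"
  using skeleton_ok[OF assms(1)] assms(2) unfolding skeleton_ok_def by auto

lemma Q_node_tree_nbrs:
  assumes "\<mu> \<in> nodes T" "ntype T \<mu> = Q_node"
  shows "\<exists>\<nu>. tree_nbrs T \<mu> = {\<nu>}"
  by (rule Q_nodeE[OF assms]) blast

lemma realE_nonQ:
  assumes "\<mu> \<in> nodes T" "ntype T \<mu> \<noteq> Q_node"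
  shows "realE T \<mu> = {}"
  using skeleton_ok[OF assms(1)] assms(2) unfolding skeleton_ok_def
  by (auto split: spqr_type.splits)

lemma skelE_nonQ:
  assumes "\<mu> \<in> nodes T" "ntype T \<mu> \<noteq> Q_node"
  shows "skelE T \<mu> = Virt ` tree_nbrs T \<mu>"
  using realE_nonQ[OF assms] unfolding skelE_def by simp

lemma finite_skelE_nonQ:
  assumes "\<mu> \<in> nodes T" "ntype T \<mu> \<noteq> Q_node"
  shows "finite (skelE T \<mu>)"
  using skelE_nonQ[OF assms] finite_tree_nbrs by simp

lemma card_skelE_nonQ:
  assumes "\<mu> \<in> nodes T" "ntype T \<mu> \<noteq> Q_node"
  shows "card (skelE T \<mu>) = card (tree_nbrs T \<mu>)"
  unfolding skelE_nonQ[OF assms] by (rule card_image) (simp add: inj_on_def)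

lemma Q_node_nbr_not_Q:
  assumes "{\<mu>, \<nu>} \<in> tedges T" "ntype T \<mu> = Q_node"
  shows "ntype T \<nu> \<noteq> Q_node"
proof
  assume "ntype T \<nu> = Q_node"
  note nodes = tedge_nodes[OF assms(1)]
  obtain e \<nu>' where \<mu>: "realE T \<mu> = {e}" "tree_nbrs T \<mu> = {\<nu>'}" "vpair T {\<mu>, \<nu>'} = e"
    "skV T \<mu> = e"
    by (rule Q_nodeE[OF nodes(1) assms(2)])
  obtain e' \<mu>' where \<nu>: "realE T \<nu> = {e'}" "tree_nbrs T \<nu> = {\<mu>'}" "vpair T {\<nu>, \<mu>'} = e'"
    "skV T \<nu> = e'"
    by (rule Q_nodeE[OF nodes(2) \<open>ntype T \<nu> = Q_node\<close>])
  have "\<nu> \<in> tree_nbrs T \<mu>" "\<mu> \<in> tree_nbrs T \<nu>"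
    using assms(1) unfolding tree_nbrs_def by (simp_all add: insert_commute)
  then have "\<nu>' = \<nu>" "\<mu>' = \<mu>" using \<mu>(2) \<nu>(2) by simp_all
  then have "e' = e" using \<mu>(3) \<nu>(3) by (simp add: insert_commute)
  have "nodes T \<subseteq> {\<mu>, \<nu>}"
  proof (rule graph_connected_subset_closed[OF nodes_connected nodes(1)])
    fix a b assume "a \<in> {\<mu>, \<nu>}" "{a, b} \<in> tedges T"
    then have "b \<in> tree_nbrs T a" "a = \<mu> \<or> a = \<nu>" unfolding tree_nbrs_def by simp_all
    then show "b \<in> {\<mu>, \<nu>}"
      using \<mu>(2) \<nu>(2) \<open>\<nu>' = \<nu>\<close> \<open>\<mu>' = \<mu>\<close> by auto
  qed simp
  then have "V \<subseteq> e"
    using Union_skV \<mu>(4) \<nu>(4) \<open>e' = e\<close> by blast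
  have "e \<in> E" using realE_subset[OF nodes(1)] \<mu>(1) by blast
  then have "finite e" "card e = 2"
    using simple unfolding simple_graph_def by (auto intro: card_ge_0_finite)
  then have "card V \<le> 2" using card_mono \<open>V \<subseteq> e\<close> by metis
  then show False using three_le_card by simp
qed

lemma card_Q_nodes_le:
  "card {\<mu>\<in>nodes T. ntype T \<mu> = Q_node} \<le> card {t\<in>tedges T. \<exists>\<rho>\<in>t. ntype T \<rho> = Q_node}"
proof (rule card_inj_on_le)
  show "inj_on (\<lambda>\<rho>. insert \<rho> (tree_nbrs T \<rho>)) {\<mu>\<in>nodes T. ntype T \<mu> = Q_node}"
  proof (rule inj_onI, rule ccontr)
    fix a b assume ab: "a \<in> {\<mu>\<in>nodes T. ntype T \<mu> = Q_node}" "b \<in> {\<mu>\<in>nodes T. ntype T \<mu> = Q_node}"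
      "insert a (tree_nbrs T a) = insert b (tree_nbrs T b)" "a \<noteq> b"
    have "b \<in> insert a (tree_nbrs T a)" using ab(3) by simp
    then have "{a, b} \<in> tedges T" using ab(4) unfolding tree_nbrs_def by simp
    from Q_node_nbr_not_Q[OF this] show False using ab(1,2) by simp
  qed
  show "(\<lambda>\<rho>. insert \<rho> (tree_nbrs T \<rho>)) ` {\<mu>\<in>nodes T. ntype T \<mu> = Q_node}
      \<subseteq> {t\<in>tedges T. \<exists>\<rho>\<in>t. ntype T \<rho> = Q_node}"
  proof
    fix t assume "t \<in> (\<lambda>\<rho>. insert \<rho> (tree_nbrs T \<rho>)) ` {\<mu>\<in>nodes T. ntype T \<mu> = Q_node}"
    then obtain \<rho> where \<rho>: "\<rho> \<in> nodes T" "ntype T \<rho> = Q_node" "t = insert \<rho> (tree_nbrs T \<rho>)"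
      by blast
    obtain \<nu> where \<nu>: "tree_nbrs T \<rho> = {\<nu>}" using Q_node_tree_nbrs[OF \<rho>(1,2)] by blast
    then have "\<nu> \<in> tree_nbrs T \<rho>" by simp
    then have "{\<rho>, \<nu>} \<in> tedges T" unfolding tree_nbrs_def by simp
    then show "t \<in> {t\<in>tedges T. \<exists>\<rho>\<in>t. ntype T \<rho> = Q_node}" using \<rho>(2,3) \<nu> by simp
  qed
  show "finite {t\<in>tedges T. \<exists>\<rho>\<in>t. ntype T \<rho> = Q_node}" using finite_tedges by simp
qed

lemma card_nonQ_tedges_less:
  "card {t\<in>tedges T. \<forall>\<rho>\<in>t. ntype T \<rho> \<noteq> Q_node} < card {\<mu>\<in>nodes T. ntype T \<mu> \<noteq> Q_node}"
proof -
  have "card (tedges T) = card {t\<in>tedges T. \<exists>\<rho>\<in>t. ntype T \<rho> = Q_node}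
      + card {t\<in>tedges T. \<forall>\<rho>\<in>t. ntype T \<rho> \<noteq> Q_node}"
    using card_Int_Diff[OF finite_tedges, of "{t. \<exists>\<rho>\<in>t. ntype T \<rho> = Q_node}"]
    by (simp add: Int_def set_diff_eq)
  moreover have "card (nodes T) = card {\<mu>\<in>nodes T. ntype T \<mu> = Q_node}
      + card {\<mu>\<in>nodes T. ntype T \<mu> \<noteq> Q_node}"
    using card_Int_Diff[OF finite_nodes, of "{\<mu>. ntype T \<mu> = Q_node}"]
    by (simp add: Int_def set_diff_eq)
  moreover have "card (tedges T) + 1 = card (nodes T)" using is_tree_nodes unfolding is_tree_def by simp
  ultimately show ?thesis using card_Q_nodes_le by linarith
qed

lemma ex_nonQ_node_at_most_one_nonQ_nbr:
  "\<exists>\<mu> \<nu>\<^sub>0. \<mu> \<in> nodes T \<and> ntype T \<mu> \<noteq> Q_node \<and>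
     (\<forall>\<nu>\<in>tree_nbrs T \<mu>. ntype T \<nu> \<noteq> Q_node \<longrightarrow> \<nu> = \<nu>\<^sub>0)"
proof -
  define N' where "N' = {\<mu>\<in>nodes T. ntype T \<mu> \<noteq> Q_node}"
  define TE' where "TE' = {t\<in>tedges T. \<forall>\<rho>\<in>t. ntype T \<rho> \<noteq> Q_node}"
  have "t \<subseteq> N' \<and> card t = 2" if "t \<in> TE'" for t
    using tedge_subset_card that unfolding TE'_def N'_def by auto
  then obtain \<mu> where \<mu>: "\<mu> \<in> N'" "card {t\<in>TE'. \<mu> \<in> t} < 2"
    using ex_vertex_incident_less_two[of N' TE'] card_nonQ_tedges_less finite_nodes
    unfolding N'_def TE'_def by auto
  have in_TE': "{\<mu>, \<nu>} \<in> {t\<in>TE'. \<mu> \<in> t}"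
    if "\<nu> \<in> tree_nbrs T \<mu>" "ntype T \<nu> \<noteq> Q_node" for \<nu>
    using that \<mu>(1) unfolding tree_nbrs_def TE'_def N'_def by simp
  have "\<nu> = \<nu>'" if "\<nu> \<in> tree_nbrs T \<mu>" "\<nu>' \<in> tree_nbrs T \<mu>"
    "ntype T \<nu> \<noteq> Q_node" "ntype T \<nu>' \<noteq> Q_node" for \<nu> \<nu>'
  proof -
    have "finite {t\<in>TE'. \<mu> \<in> t}" using finite_tedges unfolding TE'_def by simp
    moreover have "card {t\<in>TE'. \<mu> \<in> t} \<le> Suc 0" using \<mu>(2) by simp
    ultimately have all_eq: "\<forall>a\<in>{t\<in>TE'. \<mu> \<in> t}. \<forall>b\<in>{t\<in>TE'. \<mu> \<in> t}. a = b"
      by (simp only: card_le_Suc0_iff_eq)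
    have "{\<mu>, \<nu>} = {\<mu>, \<nu>'}"
      using all_eq in_TE'[OF that(1,3)] in_TE'[OF that(2,4)] by simp
    moreover have "\<nu> \<noteq> \<mu>" using tedge_nodes(3) that(1) unfolding tree_nbrs_def by blast
    ultimately show "\<nu> = \<nu>'" by (metis insert_iff singletonD)
  qed
  then show ?thesis using \<mu>(1) unfolding N'_def by blast
qed

lemma card_tree_nbrs_P_node:
  assumes "\<mu> \<in> nodes T" "ntype T \<mu> = P_node"
  shows "3 \<le> card (tree_nbrs T \<mu>)"
  using skeleton_ok[OF assms(1)] assms(2) card_skelE_nonQ[OF assms(1)]
  unfolding skeleton_ok_def by simp

lemma card_tree_nbrs_R_node:
  assumes "\<mu> \<in> nodes T" "ntype T \<mu> = R_node"
  shows "2 \<le> card (tree_nbrs T \<mu>)"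
proof -
  let ?Es = "skel_ends T \<mu> ` skelE T \<mu>"
  have ends: "\<forall>x\<in>skelE T \<mu>. card (skel_ends T \<mu> x) = 2" and tri: "triconnected (skV T \<mu>) ?Es"
    using skeleton_ok[OF assms(1)] assms(2) unfolding skeleton_ok_def by auto
  have four: "4 \<le> card (skV T \<mu>)"
    using tri unfolding triconnected_def by auto
  have conn: "graph_connected (skV T \<mu>) ?Es"
    using tri unfolding triconnected_def by (metis Diff_empty card.empty empty_subsetI zero_le)
  have "skV T \<mu> \<subseteq> \<Union> ?Es"
  proof
    fix x assume x: "x \<in> skV T \<mu>"
    have "\<not> skV T \<mu> \<subseteq> {x}" using card_mono[of "{x}" "skV T \<mu>"] four by auto
    then obtain y where "y \<in> skV T \<mu>" "y \<noteq> x" by auto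
    then show "x \<in> \<Union> ?Es" using graph_connected_imp_incident_edge[OF conn x] by blast
  qed
  moreover have "finite (\<Union> ?Es)"
    using ends finite_skelE_nonQ[OF assms(1)] assms(2) by (auto intro: card_ge_0_finite)
  ultimately have "card (skV T \<mu>) \<le> card (\<Union> ?Es)" by (rule card_mono[rotated])
  also have "\<dots> \<le> sum card ?Es" by (rule card_Union_le_sum_card)
  also have "\<dots> = (\<Sum>_\<in>?Es. 2)" using ends by (intro sum.cong) auto
  also have "\<dots> = 2 * card ?Es" by simp
  also have "\<dots> \<le> 2 * card (skelE T \<mu>)"
    using card_image_le finite_skelE_nonQ[OF assms(1)] assms(2) by simp
  also have "\<dots> = 2 * card (tree_nbrs T \<mu>)" using card_skelE_nonQ[OF assms(1)] assms(2) by simp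
  finally show ?thesis using four by linarith
qed

lemma nodes_containing_vertex_star:
  assumes "\<mu> \<in> nodes T" "w \<in> skV T \<mu>"
    and Q: "\<And>\<nu>. \<nu> \<in> tree_nbrs T \<mu> \<Longrightarrow> w \<in> skV T \<nu> \<Longrightarrow> ntype T \<nu> = Q_node"
    and "\<rho> \<in> nodes T" "w \<in> skV T \<rho>"
  shows "\<rho> = \<mu> \<or> \<rho> \<in> tree_nbrs T \<mu>"
proof -
  have "w \<in> V" using skV_subset assms(1,2) by blast
  have "{\<rho>\<in>nodes T. w \<in> skV T \<rho>} \<subseteq> insert \<mu> (tree_nbrs T \<mu>)"
  proof (rule graph_connected_subset_closed[OF nodes_containing_connected[OF \<open>w \<in> V\<close>],
        where x = \<mu>])
    fix a b assume a: "a \<in> insert \<mu> (tree_nbrs T \<mu>)" "a \<in> {\<rho>\<in>nodes T. w \<in> skV T \<rho>}"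
      and ab: "{a, b} \<in> tedges T"
    show "b \<in> insert \<mu> (tree_nbrs T \<mu>)"
    proof (cases "a = \<mu>")
      case True
      then show ?thesis using ab unfolding tree_nbrs_def by simp
    next
      case False
      then have "a \<in> tree_nbrs T \<mu>" using a(1) by simp
      moreover have "ntype T a = Q_node" using Q calculation a(2) by simp
      then obtain \<nu> where "tree_nbrs T a = {\<nu>}" using Q_node_tree_nbrs a(2) by blast
      ultimately have "tree_nbrs T a = {\<mu>}" using tree_nbrs_sym by force
      moreover have "b \<in> tree_nbrs T a" using ab unfolding tree_nbrs_def by simp
      ultimately show ?thesis by simp
    qed
  qed (use assms(1,2) in simp_all)
  then show ?thesis using assms(4,5) by blast
qed

lemma incident_edges_subset_skeleton_edges:
  assumes \<mu>: "\<mu> \<in> nodes T" "ntype T \<mu> \<noteq> Q_node"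
    and star: "\<And>\<rho>. \<rho> \<in> nodes T \<Longrightarrow> w \<in> skV T \<rho> \<Longrightarrow> \<rho> = \<mu> \<or> \<rho> \<in> tree_nbrs T \<mu>"
  shows "{e\<in>E. w \<in> e} \<subseteq> {x \<in> skel_ends T \<mu> ` skelE T \<mu>. w \<in> x}"
proof (intro subsetI CollectI conjI)
  fix e assume e: "e \<in> {e\<in>E. w \<in> e}"
  then obtain \<rho> where \<rho>: "\<rho> \<in> nodes T" "e \<in> realE T \<rho>" using ex1_realE[of e] by auto
  have \<rho>Q: "ntype T \<rho> = Q_node"
  proof (rule ccontr)
    assume "ntype T \<rho> \<noteq> Q_node"
    then show False using realE_nonQ[OF \<rho>(1)] \<rho>(2) by simp
  qed
  obtain e' \<nu> where \<rho>': "realE T \<rho> = {e'}" "tree_nbrs T \<rho> = {\<nu>}" "vpair T {\<rho>, \<nu>} = e'"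
    "skV T \<rho> = e'"
    by (rule Q_nodeE[OF \<rho>(1) \<rho>Q])
  have "e' = e" using \<rho>'(1) \<rho>(2) by simp
  then have "w \<in> skV T \<rho>" using \<rho>'(4) e by simp
  moreover have "\<rho> \<noteq> \<mu>" using \<rho>Q \<mu>(2) by auto
  ultimately have "\<rho> \<in> tree_nbrs T \<mu>" using star[OF \<rho>(1)] by blast
  moreover have "\<nu> = \<mu>" using tree_nbrs_sym[OF calculation] \<rho>'(2) by simp
  ultimately have "e = skel_ends T \<mu> (Virt \<rho>)" "Virt \<rho> \<in> skelE T \<mu>"
    using \<rho>'(3) \<open>e' = e\<close> unfolding skelE_def by (simp_all add: insert_commute)
  then show "e \<in> skel_ends T \<mu> ` skelE T \<mu>" by blast
  show "w \<in> e" using e by simp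
qed

lemma S_node_vertex_degree_le_two:
  assumes \<mu>: "\<mu> \<in> nodes T" "ntype T \<mu> = S_node"
    and nbrs: "\<forall>\<nu>\<in>tree_nbrs T \<mu>. ntype T \<nu> \<noteq> Q_node \<longrightarrow> \<nu> = \<nu>\<^sub>0"
  shows "\<exists>w\<in>V. degree E w \<le> 2"
proof -
  have cycle: "is_simple_cycle (skV T \<mu>) (skelE T \<mu>) (skel_ends T \<mu>)"
    using skeleton_ok[OF \<mu>(1)] \<mu>(2) unfolding skeleton_ok_def by simp
  have three: "3 \<le> card (skV T \<mu>)" by (rule simple_cycle_card_vertices[OF cycle])
  obtain w where w: "w \<in> skV T \<mu>" "\<nu>\<^sub>0 \<in> tree_nbrs T \<mu> \<Longrightarrow> w \<notin> skV T \<nu>\<^sub>0"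
  proof (cases "\<nu>\<^sub>0 \<in> tree_nbrs T \<mu>")
    case True
    then have "{\<mu>, \<nu>\<^sub>0} \<in> tedges T" unfolding tree_nbrs_def by simp
    then have "card (skV T \<mu> \<inter> skV T \<nu>\<^sub>0) = 2" using skV_Int card_vpair by simp
    then have "skV T \<mu> \<inter> skV T \<nu>\<^sub>0 \<noteq> skV T \<mu>" using three by auto
    then obtain w where "w \<in> skV T \<mu>" "w \<notin> skV T \<nu>\<^sub>0" by blast
    then show ?thesis using that by simp
  next
    case False
    have "skV T \<mu> \<noteq> {}" using three by auto
    then obtain w where "w \<in> skV T \<mu>" by blast
    then show ?thesis using that False by simp
  qed
  have star: "\<rho> = \<mu> \<or> \<rho> \<in> tree_nbrs T \<mu>" if "\<rho> \<in> nodes T" "w \<in> skV T \<rho>" for \<rho>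
    using nodes_containing_vertex_star[OF \<mu>(1) w(1) _ that] nbrs w(2) by blast
  have "{e\<in>E. w \<in> e} \<subseteq> {x \<in> skel_ends T \<mu> ` skelE T \<mu>. w \<in> x}"
    using incident_edges_subset_skeleton_edges[OF \<mu>(1) _ star] \<mu>(2) by simp
  moreover have "finite (skel_ends T \<mu> ` skelE T \<mu>)" using finite_skelE_nonQ \<mu> by simp
  ultimately have "degree E w \<le> card {x \<in> skel_ends T \<mu> ` skelE T \<mu>. w \<in> x}"
    unfolding degree_def by (intro card_mono) auto
  also have "\<dots> \<le> 2" by (rule simple_cycle_card_incident_le_two[OF cycle w(1)])
  finally show ?thesis using skV_subset[OF \<mu>(1)] w(1) by blast
qed

end

theorem mainTheorem2:
  fixes V :: "'v set" and E :: "'v set set" and T :: "('n, 'v) spqr_tree"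
  assumes "simple_graph V E"
    and "planar V E"
    and "biconnected V E"
    and "\<forall>v\<in>V. degree E v \<ge> 3"
    and "is_SPQR_tree V E T"
  shows "\<exists>\<mu> \<nu>. {\<mu>, \<nu>} \<in> tedges T \<and> ntype T \<mu> = Q_node \<and>
                (ntype T \<nu> = P_node \<or> ntype T \<nu> = R_node)"
proof -
  interpret SPQR_tree_of V E T
    using assms(1,3,5) unfolding biconnected_def by unfold_locales auto
  obtain \<mu> \<nu>\<^sub>0 where \<mu>: "\<mu> \<in> nodes T" "ntype T \<mu> \<noteq> Q_node"
    and nbrs: "\<forall>\<nu>\<in>tree_nbrs T \<mu>. ntype T \<nu> \<noteq> Q_node \<longrightarrow> \<nu> = \<nu>\<^sub>0"
    using ex_nonQ_node_at_most_one_nonQ_nbr by blast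
  have "ntype T \<mu> \<noteq> S_node"
  proof
    assume "ntype T \<mu> = S_node"
    then obtain w where "w \<in> V" "degree E w \<le> 2"
      using S_node_vertex_degree_le_two[OF \<mu>(1) _ nbrs] by blast
    then show False using assms(4) by fastforce
  qed
  then have PR: "ntype T \<mu> = P_node \<or> ntype T \<mu> = R_node"
    using \<mu>(2) by (cases "ntype T \<mu>") auto
  then have "2 \<le> card (tree_nbrs T \<mu>)"
    using card_tree_nbrs_P_node[OF \<mu>(1)] card_tree_nbrs_R_node[OF \<mu>(1)] by (elim disjE) simp_all
  then have "\<not> tree_nbrs T \<mu> \<subseteq> {\<nu>\<^sub>0}" using card_mono[of "{\<nu>\<^sub>0}" "tree_nbrs T \<mu>"] by auto
  then obtain \<nu> where \<nu>: "\<nu> \<in> tree_nbrs T \<mu>" "\<nu> \<noteq> \<nu>\<^sub>0" by blast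
  then have "ntype T \<nu> = Q_node" using nbrs by blast
  moreover have "{\<nu>, \<mu>} \<in> tedges T" using \<nu>(1) unfolding tree_nbrs_def by (simp add: insert_commute)
  ultimately show ?thesis using PR by blast
qed

end
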